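(* Let $k$ be a field and $d\ge 0$ an integer. Let $A_{d+1}=k[a_1,\ldots,a_{d+1},b_1,\ldots,b_{d+1}]$ and $B_d=k[a_1,\ldots,a_d,b_1,\ldots,b_d,c]$, bigraded as in the context, and regard $B_d$ as a bigraded $A_{d+1}$-module via the algebra morphism $f:A_{d+1}\to B_d$ defined in the context. Then there is an exact sequence of bigraded $A_{d+1}$-modules $$0\to t^{-2}v^{2(d+1)}\frac{1-v^{2(d+1)}}{1-v^2}\cdot A_{d+1}\longrightarrow \frac{1-v^{2(d+1)}}{1-v^2}\cdot A_{d+1}\longrightarrow B_d\to 0,$$ where $\frac{1-v^{2(d+1)}}{1-v^2}=1+v^2+\cdots+v^{2d}$.
   Context: For $e\ge 0$, $A_e=k[a_1,\ldots,a_e,b_1,\ldots,b_e]$ is the bigraded polynomial algebra with $\deg(a_i)=(2(e-i+1),0)$ and $\deg(b_i)=(2(e-i+1),-2)$. $B_d=k[a_1,\ldots,a_d,b_1,\ldots,b_d,c]$ is bigraded with $\deg(a_i)=(2(d-i+1),0)$, $\deg(b_i)=(2(d-i+1),-2)$, $\deg(c)=(2,0)$. The morphism of bigraded algebras $f:A_{d+1}\to B_d$ is given by $a_i\mapsto a_{i-1}-ca_i$ and $b_i\mapsto b_{i-1}-cb_i$ for $1\le i\le d+1$, where one sets $a_0=b_0=b_{d+1}=0$ and $a_{d+1}=1$ in $B_d$. Notation: for a bigraded vector space $N=\bigoplus_{i,j}N_{ij}$ with finite-dimensional components, its class is $P=\sum_{i,j}v^it^j\dim N_{ij}$, and for a bigraded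 module $M$, $P\cdot M$ denotes the bigraded module $N\otimes_k M$ (well defined up to isomorphism); e.g. $v^it^j\cdot M$ is $M$ with bigrading shifted so that a copy of $k$ in degree $(i,j)$ is tensored on. *)

theory Defs
  imports "HOL-Library.Poly_Mapping"
begin

datatype var = VA nat | VB nat | VC

type_synonym 'k mpoly = "(var \<Rightarrow>\<^sub>0 nat) \<Rightarrow>\<^sub>0 'k"

definition X :: "var \<Rightarrow> 'k::comm_ring_1 mpoly" where
  "X v = Poly_Mapping.single (Poly_Mapping.single v 1) 1"

definition vars_of :: "'k::zero mpoly \<Rightarrow> var set" where
  "vars_of p = (\<Union>m\<in>Poly_Mapping.keys p. Poly_Mapping.keys m)"

definition polyA :: "nat \<Rightarrow> 'k::comm_ring_1 mpoly set" where
  "polyA e = {p. vars_of p \<subseteq> {VA i |i. 1 \<le> i \<and> i \<le> e} \<union> {VB i |i. 1 \<le> i \<and> i \<le> e}}"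

definition polyB :: "nat \<Rightarrow> 'k::comm_ring_1 mpoly set" where
  "polyB d = {p. vars_of p \<subseteq> {VA i |i. 1 \<le> i \<and> i \<le> d} \<union> {VB i |i. 1 \<le> i \<and> i \<le> d} \<union> {VC}}"

fun wA :: "nat \<Rightarrow> var \<Rightarrow> int \<times> int" where
  "wA e (VA i) = (2 * (int e - int i + 1), 0)"
| "wA e (VB i) = (2 * (int e - int i + 1), -2)"
| "wA e VC = (0, 0)"

fun wB :: "nat \<Rightarrow> var \<Rightarrow> int \<times> int" where
  "wB d (VA i) = (2 * (int d - int i + 1), 0)"
| "wB d (VB i) = (2 * (int d - int i + 1), -2)"
| "wB d VC = (2, 0)"

definition mdeg :: "(var \<Rightarrow> int \<times> int) \<Rightarrow> (var \<Rightarrow>\<^sub>0 nat) \<Rightarrow> int \<times> int" where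
  "mdeg w m = ((\<Sum>v\<in>Poly_Mapping.keys m. int (Poly_Mapping.lookup m v) * fst (w v)),
               (\<Sum>v\<in>Poly_Mapping.keys m. int (Poly_Mapping.lookup m v) * snd (w v)))"

text \<open>p is bihomogeneous of bidegree ij (0 is homogeneous of every degree).\<close>
definition homog :: "(var \<Rightarrow> int \<times> int) \<Rightarrow> int \<times> int \<Rightarrow> 'k::zero mpoly \<Rightarrow> bool" where
  "homog w ij p \<longleftrightarrow> (\<forall>m\<in>Poly_Mapping.keys p. mdeg w m = ij)"

definition subst :: "(var \<Rightarrow> 'k::comm_ring_1 mpoly) \<Rightarrow> 'k mpoly \<Rightarrow> 'k mpoly" where
  "subst \<sigma> p = (\<Sum>m\<in>Poly_Mapping.keys p. Poly_Mapping.single 0 (Poly_Mapping.lookup p m) * (\<Prod>v\<in>Poly_Mapping.keys m. \<sigma> v ^ Poly_Mapping.lookup m v))"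

definition aB :: "nat \<Rightarrow> nat \<Rightarrow> 'k::comm_ring_1 mpoly" where
  "aB d j = (if j = 0 then 0 else if j = d + 1 then 1 else X (VA j))"
definition bB :: "nat \<Rightarrow> nat \<Rightarrow> 'k::comm_ring_1 mpoly" where
  "bB d j = (if j = 0 \<or> j = d + 1 then 0 else X (VB j))"

fun fimg :: "nat \<Rightarrow> var \<Rightarrow> 'k::comm_ring_1 mpoly" where
  "fimg d (VA i) = aB d (i - 1) - X VC * aB d i"
| "fimg d (VB i) = bB d (i - 1) - X VC * bB d i"
| "fimg d VC = 0"

definition fmap :: "nat \<Rightarrow> 'k::comm_ring_1 mpoly \<Rightarrow> 'k mpoly" where
  "fmap d = subst (fimg d)"

text \<open>The free A_{d+1}-module of rank d+1 (basis indexed by 0..d), elements as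
  coordinate functions vanishing beyond d.\<close>
definition freeMod :: "nat \<Rightarrow> (nat \<Rightarrow> 'k::comm_ring_1 mpoly) set" where
  "freeMod d = {x. (\<forall>l. x l \<in> polyA (d + 1)) \<and> (\<forall>l>d. x l = 0)}"

definition madd :: "(nat \<Rightarrow> 'k::comm_ring_1 mpoly) \<Rightarrow> (nat \<Rightarrow> 'k mpoly) \<Rightarrow> (nat \<Rightarrow> 'k mpoly)" where
  "madd x y = (\<lambda>l. x l + y l)"

definition smul :: "'k::comm_ring_1 mpoly \<Rightarrow> (nat \<Rightarrow> 'k mpoly) \<Rightarrow> (nat \<Rightarrow> 'k mpoly)" where
  "smul a x = (\<lambda>l. a * x l)"

text \<open>Grading of P\<cdot>A_{d+1} where basis vector l sits in bidegree s l:
  x is homogeneous of bidegree ij iff each coordinate x l has bidegree ij - s l.\<close>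
definition homogM :: "nat \<Rightarrow> (nat \<Rightarrow> int \<times> int) \<Rightarrow> int \<times> int \<Rightarrow> (nat \<Rightarrow> 'k::zero mpoly) \<Rightarrow> bool" where
  "homogM d s ij x \<longleftrightarrow> (\<forall>l\<le>d. homog (wA (d + 1)) (fst ij - fst (s l), snd ij - snd (s l)) (x l))"

text \<open>Shifts: (1 + v^2 + ... + v^{2d}) and t^{-2} v^{2(d+1)} (1 + ... + v^{2d}).\<close>
definition shiftMid :: "nat \<Rightarrow> int \<times> int" where
  "shiftMid l = (2 * int l, 0)"
definition shiftSub :: "nat \<Rightarrow> nat \<Rightarrow> int \<times> int" where
  "shiftSub d l = (2 * (int d + 1) + 2 * int l, -2)"

end

theory Submission
  imports Defs "HOL-Computational_Algebra.Polynomial" "HOL-Library.Product_Plus"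
begin

text \<open>
  Let F = c^(d+1) + sum_(l<=d) a_(l+1) c^l and G = sum_(l<=d) b_(l+1) c^l in A_(d+1)[c].
  Extending f by c |-> c gives a surjection A_(d+1)[c] -> B_d with kernel (F, G): the Horner
  tails of F and G satisfy the recursion x_(j-1) = f(x_j) + c x_j of the variables of B_d, so
  sending a_j, b_j to them is a section, inverse to the surjection modulo (F, G).
  Since F is monic in c, A_(d+1)[c]/(F) is free over A_(d+1) with basis 1, c, ..., c^d, and G
  is a nonzerodivisor on it: the substitution a_1 |-> a_1 - F kills F, fixes G and reduces every
  polynomial modulo F, while G is monic in b_1. Hence multiplication by G, written as a matrix
  phi in this basis, is injective with cokernel A_(d+1)[c]/(F, G) = B_d. The basis vector c^l
  has degree v^(2l) and G has degree t^(-2) v^(2(d+1)), which gives the shifts.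
\<close>

section \<open>Ring homomorphisms and substitution\<close>

locale ring_hom_map =
  fixes h :: "'a::comm_ring_1 \<Rightarrow> 'b::comm_ring_1"
  assumes map_add [simp]: "h (x + y) = h x + h y"
    and map_mult [simp]: "h (x * y) = h x * h y"
    and map_one [simp]: "h 1 = 1"
begin

lemma map_zero [simp]: "h 0 = 0"
  using map_add[of 0 0] by simp

lemma map_uminus [simp]: "h (- x) = - h x"
  using map_add[of x "- x"] by (simp add: eq_neg_iff_add_eq_0 add.commute)

lemma map_diff [simp]: "h (x - y) = h x - h y"
  using map_add[of x "- y"] by simp

lemma map_sum [simp]: "h (\<Sum>i\<in>S. f i) = (\<Sum>i\<in>S. h (f i))"
  by (induction S rule: infinite_finite_induct) simp_all

lemma map_power [simp]: "h (x ^ n) = h x ^ n"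
  by (induction n) simp_all

end

abbreviation mconst :: "'k::comm_ring_1 \<Rightarrow> 'k mpoly" where
  "mconst a \<equiv> Poly_Mapping.single 0 a"

lemma ring_hom_map_mconst: "ring_hom_map (mconst :: 'k::comm_ring_1 \<Rightarrow> 'k mpoly)"
  by unfold_locales (simp_all add: single_add mult_single)

lemma sum_single_lookup:
  "(\<Sum>k\<in>Poly_Mapping.keys f. Poly_Mapping.single k (Poly_Mapping.lookup f k)) = f"
proof (rule poly_mapping_eqI)
  fix x
  show "Poly_Mapping.lookup (\<Sum>k\<in>Poly_Mapping.keys f. Poly_Mapping.single k (Poly_Mapping.lookup f k)) x
        = Poly_Mapping.lookup f x"
    by (cases "x \<in> Poly_Mapping.keys f") (auto simp: lookup_sum lookup_single when_def in_keys_iff)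
qed

lemma poly_mapping_induct [case_names zero single add]:
  fixes f :: "'a \<Rightarrow>\<^sub>0 'b::comm_monoid_add"
  assumes "P 0" "\<And>k a. P (Poly_Mapping.single k a)" "\<And>f g. P f \<Longrightarrow> P g \<Longrightarrow> P (f + g)"
  shows "P f"
proof -
  have "P (\<Sum>k\<in>S. Poly_Mapping.single k (Poly_Mapping.lookup f k))" if "finite S" for S
    using that by (induction S rule: finite_induct) (simp_all add: assms)
  then show ?thesis
    by (metis sum_single_lookup finite_keys)
qed

lemma X_power: "X v ^ n = Poly_Mapping.single (Poly_Mapping.single v n) 1"
  by (induction n) (simp_all add: X_def mult_single single_add[symmetric] add.commute)

lemma monomial_eq_prod_X:
  "Poly_Mapping.single m a = mconst a * (\<Prod>v\<in>Poly_Mapping.keys m. X v ^ Poly_Mapping.lookup m v)"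
proof -
  have "(\<Prod>v\<in>S. X v ^ Poly_Mapping.lookup m v)
          = Poly_Mapping.single (\<Sum>v\<in>S. Poly_Mapping.single v (Poly_Mapping.lookup m v)) (1::'a)"
    if "finite S" for S
    using that by (induction S rule: finite_induct) (simp_all add: X_power mult_single)
  then show ?thesis
    by (simp add: sum_single_lookup mult_single)
qed

lemma mpoly_induct [consumes 1, case_names const add X_mult]:
  fixes p :: "'k::comm_ring_1 mpoly"
  assumes "vars_of p \<subseteq> V"
    and const: "\<And>a. P (mconst a)"
    and add: "\<And>p q. P p \<Longrightarrow> P q \<Longrightarrow> P (p + q)"
    and X_mult: "\<And>p v. P p \<Longrightarrow> v \<in> V \<Longrightarrow> P (X v * p)"
  shows "P p"
proof -
  have X_power_mult: "P (X v ^ n * q)" if "P q" "v \<in> V" for v n q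
    using that by (induction n) (simp_all add: mult.assoc X_mult)
  have monomials: "P (mconst a * (\<Prod>v\<in>S. X v ^ e v))" if "finite S" "S \<subseteq> V" for S e a
    using that
    by (induction S rule: finite_induct) (simp_all add: const X_power_mult mult.left_commute[of "mconst a"])
  have single: "P (Poly_Mapping.single m a)" if "m \<in> Poly_Mapping.keys p" for m a
  proof -
    have "Poly_Mapping.keys m \<subseteq> V"
      using that assms(1) by (auto simp: vars_of_def)
    then show ?thesis
      by (subst monomial_eq_prod_X) (simp add: monomials)
  qed
  have "P (\<Sum>m\<in>S. Poly_Mapping.single m (Poly_Mapping.lookup p m))" if "S \<subseteq> Poly_Mapping.keys p" for S
    using finite_subset[OF that finite_keys] that
    by (induction S rule: finite_induct) (use const[of 0] in \<open>simp_all add: add single\<close>)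
  from this[OF order_refl] show ?thesis
    by (simp add: sum_single_lookup)
qed

definition eval_monomial :: "(var \<Rightarrow> 'b::comm_ring_1) \<Rightarrow> (var \<Rightarrow>\<^sub>0 nat) \<Rightarrow> 'b" where
  "eval_monomial \<sigma> m = (\<Prod>v\<in>Poly_Mapping.keys m. \<sigma> v ^ Poly_Mapping.lookup m v)"

definition eval_mpoly :: "(var \<Rightarrow> 'b::comm_ring_1) \<Rightarrow> ('k::comm_ring_1 \<Rightarrow> 'b) \<Rightarrow> 'k mpoly \<Rightarrow> 'b" where
  "eval_mpoly \<sigma> \<kappa> p = (\<Sum>m\<in>Poly_Mapping.keys p. \<kappa> (Poly_Mapping.lookup p m) * eval_monomial \<sigma> m)"

lemma eval_monomial_superset:
  assumes "finite V" "Poly_Mapping.keys m \<subseteq> V"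
  shows "eval_monomial \<sigma> m = (\<Prod>v\<in>V. \<sigma> v ^ Poly_Mapping.lookup m v)"
  unfolding eval_monomial_def
  by (rule prod.mono_neutral_left) (use assms in \<open>auto simp: in_keys_iff\<close>)

lemma eval_monomial_add: "eval_monomial \<sigma> (m + n) = eval_monomial \<sigma> m * eval_monomial \<sigma> n"
proof -
  let ?V = "Poly_Mapping.keys m \<union> Poly_Mapping.keys n"
  have "eval_monomial \<sigma> (m + n) = (\<Prod>v\<in>?V. \<sigma> v ^ Poly_Mapping.lookup (m + n) v)"
    by (rule eval_monomial_superset) (auto dest: keys_add[THEN subsetD])
  also have "\<dots> = (\<Prod>v\<in>?V. \<sigma> v ^ Poly_Mapping.lookup m v) * (\<Prod>v\<in>?V. \<sigma> v ^ Poly_Mapping.lookup n v)"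
    by (simp add: lookup_add power_add prod.distrib)
  also have "\<dots> = eval_monomial \<sigma> m * eval_monomial \<sigma> n"
    by (subst (1 2) eval_monomial_superset[where V = ?V]) auto
  finally show ?thesis .
qed

context ring_hom_map
begin

lemma eval_mpoly_superset:
  assumes "finite M" "Poly_Mapping.keys p \<subseteq> M"
  shows "eval_mpoly \<sigma> h p = (\<Sum>m\<in>M. h (Poly_Mapping.lookup p m) * eval_monomial \<sigma> m)"
  unfolding eval_mpoly_def
  by (rule sum.mono_neutral_left) (use assms in \<open>auto simp: in_keys_iff\<close>)

lemma eval_mpoly_add: "eval_mpoly \<sigma> h (p + q) = eval_mpoly \<sigma> h p + eval_mpoly \<sigma> h q"
proof -
  let ?M = "Poly_Mapping.keys p \<union> Poly_Mapping.keys q"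
  have "eval_mpoly \<sigma> h (p + q) = (\<Sum>m\<in>?M. h (Poly_Mapping.lookup (p + q) m) * eval_monomial \<sigma> m)"
    by (rule eval_mpoly_superset) (auto dest: keys_add[THEN subsetD])
  also have "\<dots> = (\<Sum>m\<in>?M. h (Poly_Mapping.lookup p m) * eval_monomial \<sigma> m)
                  + (\<Sum>m\<in>?M. h (Poly_Mapping.lookup q m) * eval_monomial \<sigma> m)"
    by (simp add: lookup_add distrib_right sum.distrib)
  also have "\<dots> = eval_mpoly \<sigma> h p + eval_mpoly \<sigma> h q"
    by (subst (1 2) eval_mpoly_superset[where M = ?M]) auto
  finally show ?thesis .
qed

lemma eval_mpoly_zero [simp]: "eval_mpoly \<sigma> h 0 = 0"
  by (simp add: eval_mpoly_def)

lemma eval_mpoly_single: "eval_mpoly \<sigma> h (Poly_Mapping.single m a) = h a * eval_monomial \<sigma> m"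
  by (simp add: eval_mpoly_def)

lemma eval_mpoly_mult: "eval_mpoly \<sigma> h (p * q) = eval_mpoly \<sigma> h p * eval_mpoly \<sigma> h q"
proof (induction p rule: poly_mapping_induct)
  case (single m a)
  show ?case
  proof (induction q rule: poly_mapping_induct)
    case (single n b)
    then show ?case
      by (simp add: mult_single eval_mpoly_single eval_monomial_add mult_ac)
  qed (simp_all add: distrib_left eval_mpoly_add)
qed (simp_all add: distrib_right eval_mpoly_add)

lemma eval_mpoly_const [simp]: "eval_mpoly \<sigma> h (mconst a) = h a"
  by (simp add: eval_mpoly_single eval_monomial_def)

lemma ring_hom_map_eval_mpoly: "ring_hom_map (eval_mpoly \<sigma> h)"
  by unfold_locales (simp_all add: eval_mpoly_add eval_mpoly_mult flip: single_one)

lemma eval_mpoly_X [simp]: "eval_mpoly \<sigma> h (X v) = \<sigma> v"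
  by (simp add: X_def eval_mpoly_single eval_monomial_def)

end

lemma subst_eq_eval_mpoly: "subst \<sigma> = eval_mpoly \<sigma> mconst"
  by (simp add: fun_eq_iff subst_def eval_mpoly_def eval_monomial_def)

interpretation subst: ring_hom_map "subst \<sigma>" for \<sigma>
  unfolding subst_eq_eval_mpoly by (rule ring_hom_map.ring_hom_map_eval_mpoly[OF ring_hom_map_mconst])

lemma subst_const [simp]: "subst \<sigma> (mconst a) = mconst a"
  by (simp add: subst_eq_eval_mpoly ring_hom_map.eval_mpoly_const[OF ring_hom_map_mconst])

lemma subst_X [simp]: "subst \<sigma> (X v) = \<sigma> v"
  by (simp add: subst_eq_eval_mpoly ring_hom_map.eval_mpoly_X[OF ring_hom_map_mconst])

lemma mpoly_hom_eqI:
  fixes p :: "'k::comm_ring_1 mpoly"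
  assumes H: "ring_hom_map H" and H': "ring_hom_map H'"
    and const: "\<And>a. H (mconst a) = H' (mconst a)"
    and X: "\<And>v. v \<in> vars_of p \<Longrightarrow> H (X v) = H' (X v)"
  shows "H p = H' p"
  using subset_refl[of "vars_of p"]
proof (induction rule: mpoly_induct)
  case (add p q)
  then show ?case by (simp add: ring_hom_map.map_add[OF H] ring_hom_map.map_add[OF H'])
next
  case (X_mult p v)
  then show ?case by (simp add: ring_hom_map.map_mult[OF H] ring_hom_map.map_mult[OF H'] X)
qed (rule const)

lemma ring_hom_map_id: "ring_hom_map id"
  by unfold_locales simp_all

lemma subst_cong: "(\<And>v. v \<in> vars_of p \<Longrightarrow> \<sigma> v = \<tau> v) \<Longrightarrow> subst \<sigma> p = subst \<tau> p"
  by (rule mpoly_hom_eqI) (simp_all add: subst.ring_hom_map_axioms)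

lemma subst_eq_self: "(\<And>v. v \<in> vars_of p \<Longrightarrow> \<sigma> v = X v) \<Longrightarrow> subst \<sigma> p = p"
  using mpoly_hom_eqI[OF subst.ring_hom_map_axioms ring_hom_map_id, of \<sigma> p] by simp

lemma subst_subst: "subst \<tau> (subst \<sigma> p) = subst (\<lambda>v. subst \<tau> (\<sigma> v)) p"
  using mpoly_hom_eqI[of "subst \<tau> \<circ> subst \<sigma>" "subst (\<lambda>v. subst \<tau> (\<sigma> v))" p]
  by (simp add: ring_hom_map_def subst.ring_hom_map_axioms)

lemma subst_diff_self_in_ideal2:
  fixes F G :: "'k::comm_ring_1 mpoly"
  assumes "\<And>v. v \<in> vars_of p \<Longrightarrow> \<exists>u w. \<sigma> v - X v = u * F + w * G"
  shows "\<exists>u w. subst \<sigma> p - p = u * F + w * G"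
  using subset_refl[of "vars_of p"]
proof (induction rule: mpoly_induct)
  case (const a)
  have "subst \<sigma> (mconst a) - mconst a = 0 * F + 0 * G"
    by simp
  then show ?case
    by blast
next
  case (add p q)
  then obtain u1 w1 u2 w2
    where "subst \<sigma> p - p = u1 * F + w1 * G" "subst \<sigma> q - q = u2 * F + w2 * G"
    by blast
  then have "subst \<sigma> (p + q) - (p + q) = (u1 + u2) * F + (w1 + w2) * G"
    by (simp add: algebra_simps)
  then show ?case
    by blast
next
  case (X_mult p v)
  obtain u1 w1 where 1: "\<sigma> v - X v = u1 * F + w1 * G"
    using assms X_mult.hyps by blast
  obtain u2 w2 where 2: "subst \<sigma> p - p = u2 * F + w2 * G"
    using X_mult.IH by blast
  have "subst \<sigma> (X v * p) - X v * p = subst \<sigma> p * (\<sigma> v - X v) + X v * (subst \<sigma> p - p)"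
    by (simp add: algebra_simps)
  also have "\<dots> = (subst \<sigma> p * u1 + X v * u2) * F + (subst \<sigma> p * w1 + X v * w2) * G"
    unfolding 1 2 by (simp add: algebra_simps)
  finally show ?case
    by blast
qed

lemma vars_of_add_subset:
  "vars_of p \<subseteq> V \<Longrightarrow> vars_of q \<subseteq> V \<Longrightarrow> vars_of (p + q) \<subseteq> V"
  unfolding vars_of_def using keys_add[of p q] by blast

lemma vars_of_mult_subset:
  fixes p q :: "'k::comm_ring_1 mpoly"
  assumes "vars_of p \<subseteq> V" "vars_of q \<subseteq> V"
  shows "vars_of (p * q) \<subseteq> V"
proof
  fix v assume "v \<in> vars_of (p * q)"
  then obtain m where m: "m \<in> Poly_Mapping.keys (p * q)" "v \<in> Poly_Mapping.keys m"
    unfolding vars_of_def by auto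
  then obtain a b where "m = a + b" "a \<in> Poly_Mapping.keys p" "b \<in> Poly_Mapping.keys q"
    using keys_mult[of p q] by blast
  then show "v \<in> V"
    using m(2) keys_add[of a b] assms unfolding vars_of_def by blast
qed

lemma vars_of_const [simp]: "vars_of (mconst a) = {}"
  by (simp add: vars_of_def)

lemma vars_of_zero [simp]: "vars_of 0 = {}"
  by (simp add: vars_of_def)

lemma vars_of_one [simp]: "vars_of (1 :: 'k::comm_ring_1 mpoly) = {}"
  by (simp add: vars_of_def)

lemma vars_of_X [simp]: "vars_of (X v :: 'k::comm_ring_1 mpoly) = {v}"
  by (simp add: vars_of_def X_def)

lemma vars_of_uminus [simp]: "vars_of (- p :: 'k::comm_ring_1 mpoly) = vars_of p"
  by (simp add: vars_of_def)

lemma vars_of_diff_subset: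
  "vars_of (p :: 'k::comm_ring_1 mpoly) \<subseteq> V \<Longrightarrow> vars_of q \<subseteq> V \<Longrightarrow> vars_of (p - q) \<subseteq> V"
  using vars_of_add_subset[of p V "- q"] by simp

lemma vars_of_X_subset: "v \<in> V \<Longrightarrow> vars_of (X v :: 'k::comm_ring_1 mpoly) \<subseteq> V"
  by simp

lemma vars_of_power_subset:
  "vars_of (p :: 'k::comm_ring_1 mpoly) \<subseteq> V \<Longrightarrow> vars_of (p ^ n) \<subseteq> V"
  by (induction n) (simp_all add: vars_of_mult_subset)

lemma vars_of_sum_subset:
  "(\<And>i. i \<in> S \<Longrightarrow> vars_of (f i :: 'k::comm_ring_1 mpoly) \<subseteq> V) \<Longrightarrow> vars_of (\<Sum>i\<in>S. f i) \<subseteq> V"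
  by (induction S rule: infinite_finite_induct) (simp_all add: vars_of_add_subset)

lemmas vars_of_subsetI =
  vars_of_add_subset vars_of_mult_subset vars_of_diff_subset vars_of_X_subset
  vars_of_power_subset vars_of_sum_subset

lemma vars_of_subst_subset:
  assumes "\<And>v. v \<in> vars_of p \<Longrightarrow> vars_of (\<sigma> v) \<subseteq> W"
  shows "vars_of (subst \<sigma> p) \<subseteq> W"
  using subset_refl[of "vars_of p"]
  by (induction rule: mpoly_induct) (simp_all add: vars_of_subsetI assms)

section \<open>Bihomogeneity\<close>

lemma mdeg_eq_sum: "mdeg w m = (\<Sum>v\<in>Poly_Mapping.keys m. (int (Poly_Mapping.lookup m v) * fst (w v),
                                                      int (Poly_Mapping.lookup m v) * snd (w v)))"
  by (simp add: mdeg_def sum_prod)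

lemma mdeg_add: "mdeg w (m + n) = mdeg w m + mdeg w n"
proof -
  let ?V = "Poly_Mapping.keys m \<union> Poly_Mapping.keys n"
  let ?d = "\<lambda>m v. (int (Poly_Mapping.lookup m v) * fst (w v), int (Poly_Mapping.lookup m v) * snd (w v))"
  have superset: "mdeg w k = (\<Sum>v\<in>?V. ?d k v)" if "Poly_Mapping.keys k \<subseteq> ?V" for k
    unfolding mdeg_eq_sum
    by (rule sum.mono_neutral_left) (use that in \<open>auto simp: in_keys_iff zero_prod_def\<close>)
  have "mdeg w (m + n) = (\<Sum>v\<in>?V. ?d (m + n) v)"
    by (rule superset) (rule keys_add)
  also have "\<dots> = (\<Sum>v\<in>?V. ?d m v) + (\<Sum>v\<in>?V. ?d n v)"
    by (simp add: lookup_add distrib_right sum.distrib[symmetric])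
  also have "\<dots> = mdeg w m + mdeg w n"
    by (simp add: superset)
  finally show ?thesis .
qed

lemma homog_zero [simp]: "homog w ij 0"
  by (simp add: homog_def)

lemma homog_const: "homog w 0 (mconst a)"
  by (simp add: homog_def mdeg_def zero_prod_def)

lemma homog_one: "homog w 0 (1 :: 'k::comm_ring_1 mpoly)"
  using homog_const[of w "1 :: 'k"] by simp

lemma homog_X: "homog w (w v) (X v :: 'k::comm_ring_1 mpoly)"
  by (simp add: homog_def X_def mdeg_def)

lemma homog_add: "homog w ij p \<Longrightarrow> homog w ij q \<Longrightarrow> homog w ij (p + q)"
  unfolding homog_def using keys_add[of p q] by blast

lemma homog_uminus: "homog w ij (p :: 'k::comm_ring_1 mpoly) \<Longrightarrow> homog w ij (- p)"
  by (simp add: homog_def)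

lemma homog_diff: "homog w ij (p :: 'k::comm_ring_1 mpoly) \<Longrightarrow> homog w ij q \<Longrightarrow> homog w ij (p - q)"
  using homog_add[of w ij p "- q"] homog_uminus[of w ij q] by simp

lemma homog_sum: "(\<And>i. i \<in> S \<Longrightarrow> homog w ij (f i)) \<Longrightarrow> homog w ij (\<Sum>i\<in>S. f i)"
  by (induction S rule: infinite_finite_induct) (simp_all add: homog_add)

lemma homog_mult:
  fixes p q :: "'k::comm_ring_1 mpoly"
  assumes "homog w ij p" "homog w kl q"
  shows "homog w (ij + kl) (p * q)"
  unfolding homog_def
proof
  fix m assume "m \<in> Poly_Mapping.keys (p * q)"
  then obtain a b where "m = a + b" "a \<in> Poly_Mapping.keys p" "b \<in> Poly_Mapping.keys q"
    using keys_mult[of p q] by blast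
  then show "mdeg w m = ij + kl"
    using assms by (simp add: homog_def mdeg_add)
qed

lemma homog_power:
  "homog w (a, b) (p :: 'k::comm_ring_1 mpoly) \<Longrightarrow> homog w (int n * a, int n * b) (p ^ n)"
proof (induction n)
  case (Suc n)
  then have "homog w ((a, b) + (int n * a, int n * b)) (p * p ^ n)"
    by (intro homog_mult)
  then show ?case
    by (simp add: algebra_simps)
qed (simp add: homog_one[unfolded zero_prod_def])

lemma homog_prod:
  "(\<And>i. i \<in> S \<Longrightarrow> homog w (ij i) (f i :: 'k::comm_ring_1 mpoly)) \<Longrightarrow> homog w (\<Sum>i\<in>S. ij i) (\<Prod>i\<in>S. f i)"
  by (induction S rule: infinite_finite_induct) (simp_all add: homog_one homog_mult)

lemma homog_subst:
  fixes p :: "'k::comm_ring_1 mpoly"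
  assumes p: "homog w ij p" and \<sigma>: "\<And>v. v \<in> vars_of p \<Longrightarrow> homog w' (w v) (\<sigma> v)"
  shows "homog w' ij (subst \<sigma> p)"
  unfolding subst_def
proof (rule homog_sum)
  fix m assume m: "m \<in> Poly_Mapping.keys p"
  have "homog w' (mdeg w m) (\<Prod>v\<in>Poly_Mapping.keys m. \<sigma> v ^ Poly_Mapping.lookup m v)"
    unfolding mdeg_eq_sum
    by (rule homog_prod, rule homog_power) (use m \<sigma> in \<open>auto simp: vars_of_def\<close>)
  then have "homog w' (0 + mdeg w m) (mconst (Poly_Mapping.lookup p m) * (\<Prod>v\<in>Poly_Mapping.keys m. \<sigma> v ^ Poly_Mapping.lookup m v))"
    by (intro homog_mult homog_const)
  then show "homog w' ij (mconst (Poly_Mapping.lookup p m) * (\<Prod>v\<in>Poly_Mapping.keys m. \<sigma> v ^ Poly_Mapping.lookup m v))"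
    using m p by (simp add: homog_def)
qed

section \<open>Polynomials monic in one variable\<close>

lemma degree_mult_monic:
  fixes p q :: "'a::comm_ring_1 poly"
  assumes "lead_coeff q = 1" "p \<noteq> 0"
  shows "degree (p * q) = degree p + degree q"
proof (rule antisym)
  have "coeff (p * q) (degree p + degree q) \<noteq> 0"
    using assms by (simp add: coeff_mult_degree_sum)
  then show "degree p + degree q \<le> degree (p * q)"
    by (rule le_degree)
qed (rule degree_mult_le)

lemma mult_monic_eq_0_iff:
  fixes p q :: "'a::comm_ring_1 poly"
  assumes "lead_coeff q = 1"
  shows "p * q = 0 \<longleftrightarrow> p = 0"
proof
  assume "p * q = 0"
  show "p = 0"
  proof (rule ccontr)
    assume "p \<noteq> 0"
    have "coeff (p * q) (degree p + degree q) \<noteq> 0"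
      using assms \<open>p \<noteq> 0\<close> by (simp add: coeff_mult_degree_sum)
    with \<open>p * q = 0\<close> show False
      by simp
  qed
qed simp

definition poly_in :: "var \<Rightarrow> 'k::comm_ring_1 mpoly \<Rightarrow> 'k mpoly poly" where
  "poly_in w = eval_mpoly (\<lambda>v. if v = w then [:0, 1:] else [:X v:]) (\<lambda>a. [:mconst a:])"

lemma ring_hom_map_pCons_const: "ring_hom_map (\<lambda>a :: 'k::comm_ring_1. [:mconst a:])"
  by unfold_locales (simp_all add: single_add mult_single mult.commute)

interpretation poly_in: ring_hom_map "poly_in w" for w
  unfolding poly_in_def by (rule ring_hom_map.ring_hom_map_eval_mpoly[OF ring_hom_map_pCons_const])

lemma poly_in_X [simp]: "poly_in w (X v) = (if v = w then [:0, 1:] else [:X v:])"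
  by (simp add: poly_in_def ring_hom_map.eval_mpoly_X[OF ring_hom_map_pCons_const])

lemma poly_in_const [simp]: "poly_in w (mconst a) = [:mconst a:]"
  by (simp add: poly_in_def ring_hom_map.eval_mpoly_const[OF ring_hom_map_pCons_const])

lemma poly_in_free_var:
  fixes p :: "'k::comm_ring_1 mpoly"
  assumes "w \<notin> vars_of p"
  shows "poly_in w p = [:p:]"
  by (rule mpoly_hom_eqI) (use assms in \<open>auto simp: ring_hom_map_def poly_in.ring_hom_map_axioms\<close>)

lemma poly_poly_in: "poly (poly_in w p) (X w) = (p :: 'k::comm_ring_1 mpoly)"
  using mpoly_hom_eqI[of "\<lambda>p. poly (poly_in w p) (X w)" id p]
  by (simp add: ring_hom_map_def ring_hom_map_id)

lemma mult_eq_0_if_monic_in: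
  fixes F q :: "'k::comm_ring_1 mpoly"
  assumes "lead_coeff (poly_in w F) = 1" "q * F = 0"
  shows "q = 0"
proof -
  have "poly_in w q * poly_in w F = 0"
    using assms(2) by (metis poly_in.map_mult poly_in.map_zero)
  then have "poly_in w q = 0"
    using mult_monic_eq_0_iff[OF assms(1)] by blast
  then show ?thesis
    by (metis poly_poly_in poly_0)
qed

lemma coeffs_eq_0_if_monic_in_dvd:
  fixes F :: "'k::comm_ring_1 mpoly"
  assumes F: "lead_coeff (poly_in w F) = 1" "d < degree (poly_in w F)"
    and free: "\<And>l. w \<notin> vars_of (z l)"
    and dvd: "F dvd (\<Sum>l\<le>d. z l * X w ^ l)"
    and "l \<le> d"
  shows "z l = 0"
proof -
  define P where "P = poly_in w (\<Sum>l\<le>d. z l * X w ^ l)"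
  have coeff_P: "coeff P n = (if n \<le> d then z n else 0)" for n
    by (simp add: P_def poly_in_free_var[OF free] coeff_sum monom_altdef[symmetric] coeff_monom
        flip: smult_monom cong: if_cong)
  obtain S where S: "(\<Sum>l\<le>d. z l * X w ^ l) = S * F"
    using dvd by (auto simp: dvd_def mult.commute)
  have "poly_in w S = 0"
  proof (rule ccontr)
    assume "poly_in w S \<noteq> 0"
    then have "degree P = degree (poly_in w S) + degree (poly_in w F)"
      unfolding P_def S by (simp add: degree_mult_monic[OF F(1)])
    moreover have "degree P \<le> d"
      by (rule degree_le) (simp add: coeff_P)
    ultimately show False
      using F(2) by simp
  qed
  then have "P = 0"
    unfolding P_def S by simp
  then show ?thesis
    using coeff_P[of l] \<open>l \<le> d\<close> by simp
qed

section \<open>B_d as a quotient of A_(d+1)[c]\<close>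

definition varsA :: "nat \<Rightarrow> var set" where
  "varsA e = {VA i |i. 1 \<le> i \<and> i \<le> e} \<union> {VB i |i. 1 \<le> i \<and> i \<le> e}"

lemma VA_in_varsA [simp]: "VA i \<in> varsA e \<longleftrightarrow> 1 \<le> i \<and> i \<le> e"
  by (auto simp: varsA_def)

lemma VB_in_varsA [simp]: "VB i \<in> varsA e \<longleftrightarrow> 1 \<le> i \<and> i \<le> e"
  by (auto simp: varsA_def)

lemma VC_notin_varsA [simp]: "VC \<notin> varsA e"
  by (auto simp: varsA_def)

lemma polyA_iff: "p \<in> polyA e \<longleftrightarrow> vars_of p \<subseteq> varsA e"
  by (simp add: polyA_def varsA_def)

lemma polyB_iff: "p \<in> polyB d \<longleftrightarrow> vars_of p \<subseteq> insert VC (varsA d)"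
  by (auto simp: polyB_def varsA_def)

lemma freeMod_iff: "x \<in> freeMod d \<longleftrightarrow> (\<forall>l. vars_of (x l) \<subseteq> varsA (Suc d)) \<and> (\<forall>l>d. x l = 0)"
  by (simp add: freeMod_def polyA_iff)

text \<open>
  \<open>bvar u e d j\<close> is the variable u_j of B_d, for u = VA or VB, under the conventions u_0 = 0
  and u_(d+1) = e; thus \<open>aB d = bvar VA 1 d\<close> and \<open>bB d = bvar VB 0 d\<close>.
\<close>

definition bvar :: "(nat \<Rightarrow> var) \<Rightarrow> 'k::comm_ring_1 mpoly \<Rightarrow> nat \<Rightarrow> nat \<Rightarrow> 'k mpoly" where
  "bvar u e d j = (if j = 0 then 0 else if j = Suc d then e else X (u j))"

lemma fimg_eq_bvar:
  "(u, e) \<in> {(VA, 1), (VB, 0)} \<Longrightarrow> fimg d (u i) = bvar u e d (i - 1) - X VC * bvar u e d i"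
  by (auto simp: aB_def bB_def bvar_def)

lemma varsA_E:
  assumes "v \<in> varsA e"
  obtains u and c :: "'k::comm_ring_1 mpoly" and i
  where "(u, c) \<in> {(VA, 1), (VB, 0)}" "v = u i" "1 \<le> i" "i \<le> e"
  using assms by (cases v) auto

lemma vars_of_bvar:
  "(u, e) \<in> {(VA, 1), (VB, 0)} \<Longrightarrow> j \<le> Suc d \<Longrightarrow> vars_of (bvar u e d j) \<subseteq> insert VC (varsA d)"
  by (auto simp: bvar_def)

definition horner_tail :: "(nat \<Rightarrow> var) \<Rightarrow> 'k::comm_ring_1 mpoly \<Rightarrow> nat \<Rightarrow> nat \<Rightarrow> 'k mpoly" where
  "horner_tail u e d j = (\<Sum>l\<in>{j..d}. X (u (Suc l)) * X VC ^ (l - j)) + e * X VC ^ (Suc d - j)"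

abbreviation Fpoly :: "nat \<Rightarrow> 'k::comm_ring_1 mpoly" where
  "Fpoly d \<equiv> horner_tail VA 1 d 0"

abbreviation Gpoly :: "nat \<Rightarrow> 'k::comm_ring_1 mpoly" where
  "Gpoly d \<equiv> horner_tail VB 0 d 0"

lemma horner_tail_top [simp]: "horner_tail u e d (Suc d) = e"
  by (simp add: horner_tail_def)

lemma horner_tail_Suc:
  assumes "j \<le> d"
  shows "horner_tail u e d j = X (u (Suc j)) + X VC * horner_tail u e d (Suc j)"
proof -
  have "X VC * (\<Sum>l\<in>{Suc j..d}. X (u (Suc l)) * X VC ^ (l - Suc j))
        = (\<Sum>l\<in>{Suc j..d}. X (u (Suc l)) * X VC ^ (l - j) :: 'a mpoly)"
    unfolding sum_distrib_left
  proof (rule sum.cong)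
    fix l assume "l \<in> {Suc j..d}"
    then have "l - j = Suc (l - Suc j)"
      by (auto simp: Suc_diff_Suc)
    then show "X VC * (X (u (Suc l)) * X VC ^ (l - Suc j)) = X (u (Suc l)) * X VC ^ (l - j)"
      by (simp add: mult_ac)
  qed simp
  moreover have "Suc d - j = Suc (Suc d - Suc j)"
    using assms by simp
  ultimately show ?thesis
    using assms by (simp add: horner_tail_def sum.atLeast_Suc_atMost algebra_simps)
qed

lemma vars_of_horner_tail:
  "vars_of e = {} \<Longrightarrow> vars_of (horner_tail u e d j) \<subseteq> insert VC (u ` {Suc j..Suc d})"
  unfolding horner_tail_def by (intro vars_of_subsetI) auto

lemma poly_in_VC_Fpoly:
  "lead_coeff (poly_in VC (Fpoly d :: 'k::comm_ring_1 mpoly)) = 1 \<and> degree (poly_in VC (Fpoly d :: 'k mpoly)) = Suc d"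
proof -
  have "lead_coeff (poly_in VC (horner_tail VA 1 d j :: 'k mpoly)) = 1
         \<and> degree (poly_in VC (horner_tail VA 1 d j :: 'k mpoly)) = Suc d - j"
    if "j \<le> Suc d" for j
    using that
  proof (induction j rule: inc_induct)
    case (step j)
    let ?T = "poly_in VC (horner_tail VA 1 d (Suc j) :: 'k mpoly)"
    have eq: "poly_in VC (horner_tail VA 1 d j) = pCons (X (VA (Suc j))) ?T"
      using step.hyps by (simp add: horner_tail_Suc)
    have "?T \<noteq> 0"
      using step.IH by auto
    then have "lead_coeff (poly_in VC (horner_tail VA 1 d j)) = lead_coeff ?T"
      "degree (poly_in VC (horner_tail VA 1 d j :: 'k mpoly)) = Suc (degree ?T)"
      unfolding eq by (simp_all add: degree_pCons_eq)
    then show ?case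
      using step by (auto simp: Suc_diff_le)
  qed simp
  from this[of 0] show ?thesis
    by auto
qed

text \<open>\<open>fext d\<close> extends f to A_(d+1)[c] by c |-> c; \<open>lift d\<close> is a section of it.\<close>

definition fext :: "nat \<Rightarrow> var \<Rightarrow> 'k::comm_ring_1 mpoly" where
  "fext d v = (if v = VC then X VC else fimg d v)"

definition lift :: "nat \<Rightarrow> var \<Rightarrow> 'k::comm_ring_1 mpoly" where
  "lift d v = (case v of VA j \<Rightarrow> horner_tail VA 1 d j | VB j \<Rightarrow> horner_tail VB 0 d j | VC \<Rightarrow> X VC)"

lemma fext_VC [simp]: "fext d VC = X VC"
  by (simp add: fext_def)

lemma lift_VC [simp]: "lift d VC = X VC"
  by (simp add: lift_def)

lemma fext_eq_bvar:
  "(u, e) \<in> {(VA, 1), (VB, 0)} \<Longrightarrow> fext d (u i) = bvar u e d (i - 1) - X VC * bvar u e d i"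
  by (auto simp: fext_def fimg_eq_bvar)

lemma lift_eq_horner_tail: "(u, e) \<in> {(VA, 1), (VB, 0)} \<Longrightarrow> lift d (u j) = horner_tail u e d j"
  by (auto simp: lift_def)

lemma subst_fext_horner_tail:
  assumes ue: "(u, e) \<in> {(VA, 1), (VB, 0)}" and "j \<le> Suc d"
  shows "subst (fext d) (horner_tail u e d j) = (bvar u e d j :: 'k::comm_ring_1 mpoly)"
  using \<open>j \<le> Suc d\<close>
proof (induction j rule: inc_induct)
  case base
  show ?case
    using ue by (auto simp: bvar_def)
next
  case (step j)
  then show ?case
    using fext_eq_bvar[OF ue, of d "Suc j"] by (simp add: horner_tail_Suc bvar_def)
qed

lemma subst_fext_Fpoly [simp]: "subst (fext d) (Fpoly d) = 0"
  using subst_fext_horner_tail[of VA 1 0 d] by (simp add: bvar_def)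

lemma subst_fext_Gpoly [simp]: "subst (fext d) (Gpoly d) = 0"
  using subst_fext_horner_tail[of VB 0 0 d] by (simp add: bvar_def)

lemma subst_lift_bvar:
  assumes ue: "(u, e) \<in> {(VA, 1), (VB, 0)}" and "j \<le> Suc d"
  shows "subst (lift d) (bvar u e d j) = (if j = 0 then 0 else horner_tail u e d j :: 'k::comm_ring_1 mpoly)"
  using assms by (auto simp: bvar_def lift_eq_horner_tail)

lemma subst_lift_fext:
  assumes ue: "(u, e) \<in> {(VA, 1), (VB, 0)}" and i: "1 \<le> i" "i \<le> Suc d"
  shows "subst (lift d) (fext d (u i)) = X (u i) - (if i = 1 then horner_tail u e d 0 else 0 :: 'k::comm_ring_1 mpoly)"
proof -
  have "horner_tail u e d (i - 1) = X (u i) + X VC * horner_tail u e d i"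
    using horner_tail_Suc[of "i - 1" d u e] i by simp
  then show ?thesis
    using i by (cases "i = 1") (simp_all add: fext_eq_bvar[OF ue] subst_lift_bvar[OF ue])
qed

lemma subst_fext_lift:
  assumes "vars_of b \<subseteq> insert VC (varsA d)"
  shows "subst (fext d) (subst (lift d) b) = (b :: 'k::comm_ring_1 mpoly)"
proof -
  have "subst (fext d) (lift d v) = (X v :: 'k mpoly)" if "v \<in> insert VC (varsA d)" for v
    using that subst_fext_horner_tail[of VA "1 :: 'k mpoly" _ d] subst_fext_horner_tail[of VB "0 :: 'k mpoly" _ d]
    by (cases v) (auto simp: lift_def bvar_def)
  then show ?thesis
    using assms unfolding subst_subst by (intro subst_eq_self) auto
qed

lemma vars_of_lift: "v \<in> insert VC (varsA d) \<Longrightarrow> vars_of (lift d v) \<subseteq> insert VC (varsA (Suc d))"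
  using vars_of_horner_tail[of 1 VA d] vars_of_horner_tail[of 0 VB d]
  by (cases v) (fastforce simp: lift_def)+

lemma subst_lift_fext_mod:
  fixes p :: "'k::comm_ring_1 mpoly"
  assumes "vars_of p \<subseteq> insert VC (varsA (Suc d))"
  shows "\<exists>u w. subst (lift d) (subst (fext d) p) - p = u * Fpoly d + w * Gpoly d"
  unfolding subst_subst
proof (rule subst_diff_self_in_ideal2)
  fix v assume "v \<in> vars_of p"
  then have v: "v \<in> insert VC (varsA (Suc d))"
    using assms by blast
  show "\<exists>u w. subst (lift d) (fext d v) - X v = u * Fpoly d + w * Gpoly d"
  proof (cases v)
    case (VA i)
    then have "subst (lift d) (fext d v) - X v = (if i = 1 then - 1 else 0) * Fpoly d + 0 * Gpoly d"
      using v subst_lift_fext[of VA 1 i d] by (cases "i = 1") simp_all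
    then show ?thesis
      by blast
  next
    case (VB i)
    then have "subst (lift d) (fext d v) - X v = 0 * Fpoly d + (if i = 1 then - 1 else 0) * Gpoly d"
      using v subst_lift_fext[of VB 0 i d] by (cases "i = 1") simp_all
    then show ?thesis
      by blast
  next
    case VC
    then have "subst (lift d) (fext d v) - X v = 0 * Fpoly d + 0 * Gpoly d"
      by simp
    then show ?thesis
      by blast
  qed
qed

lemma vars_of_Fpoly: "vars_of (Fpoly d) \<subseteq> insert VC (varsA (Suc d))"
  using vars_of_horner_tail[of 1 VA d 0] by auto

lemma vars_of_Gpoly: "vars_of (Gpoly d) \<subseteq> insert VC (varsA (Suc d))"
  using vars_of_horner_tail[of 0 VB d 0] by auto

lemma kernel_subst_fext:
  fixes p :: "'k::comm_ring_1 mpoly" and d :: nat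
  defines "V \<equiv> insert VC (varsA (Suc d))"
  assumes p: "vars_of p \<subseteq> V" and ker: "subst (fext d) p = 0"
  shows "\<exists>u w. vars_of u \<subseteq> V \<and> vars_of w \<subseteq> V \<and> p = u * Fpoly d + w * Gpoly d"
proof -
  obtain u w where "- p = u * Fpoly d + w * Gpoly d"
    using subst_lift_fext_mod[OF p[unfolded V_def]] ker by auto
  \<comment> \<open>\<open>u\<close> and \<open>w\<close> may involve variables outside \<open>V\<close>; projecting onto \<open>V\<close> keeps the identity.\<close>
  define \<pi> where "\<pi> v = (if v \<in> V then X v else 0 :: 'k mpoly)" for v
  have \<pi>_id: "subst \<pi> q = q" if "vars_of q \<subseteq> V" for q
    using that by (intro subst_eq_self) (auto simp: \<pi>_def)
  have \<pi>_vars: "vars_of (subst \<pi> q) \<subseteq> V" for q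
    by (rule vars_of_subst_subset) (simp add: \<pi>_def)
  have "subst \<pi> (Fpoly d) = Fpoly d" "subst \<pi> (Gpoly d) = Gpoly d"
    using \<pi>_id vars_of_Fpoly vars_of_Gpoly unfolding V_def by blast+
  then have "- p = subst \<pi> u * Fpoly d + subst \<pi> w * Gpoly d"
    using arg_cong[OF \<open>- p = _\<close>, of "subst \<pi>"] by (simp add: \<pi>_id p)
  then have "p = - (subst \<pi> u * Fpoly d + subst \<pi> w * Gpoly d)"
    by (metis minus_minus)
  then have "p = (- subst \<pi> u) * Fpoly d + (- subst \<pi> w) * Gpoly d"
    by simp
  moreover have "vars_of (- subst \<pi> u) \<subseteq> V" "vars_of (- subst \<pi> w) \<subseteq> V"
    using \<pi>_vars by simp_all
  ultimately show ?thesis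
    by blast
qed

section \<open>The free module and the maps phi and psi\<close>

definition cpoly :: "nat \<Rightarrow> (nat \<Rightarrow> 'k::comm_ring_1 mpoly) \<Rightarrow> 'k mpoly" where
  "cpoly d z = (\<Sum>l\<le>d. z l * X VC ^ l)"

lemma cpoly_madd: "cpoly d (madd x y) = cpoly d x + cpoly d y"
  by (simp add: cpoly_def madd_def distrib_right sum.distrib)

lemma cpoly_smul: "cpoly d (smul a x) = a * cpoly d x"
  by (simp add: cpoly_def smul_def sum_distrib_left mult.assoc)

lemma freeMod_madd: "x \<in> freeMod d \<Longrightarrow> y \<in> freeMod d \<Longrightarrow> madd x y \<in> freeMod d"
  by (simp add: freeMod_iff madd_def vars_of_add_subset)

lemma freeMod_smul: "vars_of a \<subseteq> varsA (Suc d) \<Longrightarrow> x \<in> freeMod d \<Longrightarrow> smul a x \<in> freeMod d"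
  by (simp add: freeMod_iff smul_def vars_of_mult_subset)

lemma vars_of_cpoly: "x \<in> freeMod d \<Longrightarrow> vars_of (cpoly d x) \<subseteq> insert VC (varsA (Suc d))"
  unfolding cpoly_def freeMod_iff by (intro vars_of_subsetI) auto

lemma freeMod_eqI:
  fixes x y :: "nat \<Rightarrow> 'k::comm_ring_1 mpoly"
  assumes x: "x \<in> freeMod d" and y: "y \<in> freeMod d" and dvd: "Fpoly d dvd (cpoly d x - cpoly d y)"
  shows "x = y"
proof
  fix l
  show "x l = y l"
  proof (cases "l \<le> d")
    case True
    have free: "VC \<notin> vars_of (x l - y l)" for l
      using x y vars_of_diff_subset[of "x l" "varsA (Suc d)" "y l"] by (auto simp: freeMod_iff)
    have "Fpoly d dvd (\<Sum>l\<le>d. (x l - y l) * X VC ^ l)"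
      using dvd by (simp add: cpoly_def left_diff_distrib sum_subtractf)
    then have "x l - y l = 0"
      using poly_in_VC_Fpoly[where 'k = 'k, of d] free True
      by (intro coeffs_eq_0_if_monic_in_dvd[where w = VC and F = "Fpoly d"]) auto
    then show ?thesis
      by simp
  next
    case False
    then show ?thesis
      using x y by (simp add: freeMod_iff)
  qed
qed

definition mul_c :: "nat \<Rightarrow> (nat \<Rightarrow> 'k::comm_ring_1 mpoly) \<Rightarrow> (nat \<Rightarrow> 'k mpoly)" where
  "mul_c d z = (\<lambda>l. if l \<le> d then (if l = 0 then 0 else z (l - 1)) - z d * X (VA (Suc l)) else 0)"

lemma cpoly_mul_c: "cpoly d (mul_c d z) = X VC * cpoly d z - z d * Fpoly d"
proof -
  define g where "g l = (if l = 0 then 0 else z (l - 1)) * X VC ^ l" for l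
  have "(\<Sum>l\<le>d. g l) + z d * X VC ^ Suc d = (\<Sum>l\<le>Suc d. g l)"
    by (simp add: g_def)
  also have "\<dots> = X VC * cpoly d z"
    unfolding sum.atMost_Suc_shift by (simp add: g_def cpoly_def sum_distrib_left mult_ac)
  finally have shift: "(\<Sum>l\<le>d. g l) + z d * X VC ^ Suc d = X VC * cpoly d z" .
  have "cpoly d (mul_c d z) = (\<Sum>l\<le>d. g l) - z d * (\<Sum>l\<le>d. X (VA (Suc l)) * X VC ^ l)"
    by (simp add: cpoly_def mul_c_def g_def algebra_simps sum_subtractf sum_distrib_left)
  also have "\<dots> = X VC * cpoly d z - z d * Fpoly d"
    using shift by (simp add: horner_tail_def atLeast0AtMost algebra_simps)
  finally show ?thesis .
qed

lemma freeMod_mul_c: "z \<in> freeMod d \<Longrightarrow> mul_c d z \<in> freeMod d"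
  by (simp add: freeMod_iff mul_c_def vars_of_subsetI)

lemma X_mult_cpoly_mod:
  assumes z: "z \<in> freeMod d" and v: "v \<in> insert VC (varsA (Suc d))"
  shows "\<exists>z'\<in>freeMod d. Fpoly d dvd (X v * cpoly d z - cpoly d z')"
proof (cases "v = VC")
  case True
  then have "X v * cpoly d z - cpoly d (mul_c d z) = z d * Fpoly d"
    by (simp add: cpoly_mul_c)
  then show ?thesis
    using freeMod_mul_c[OF z] by (metis dvd_triv_right)
next
  case False
  then have "smul (X v) z \<in> freeMod d"
    using v z by (intro freeMod_smul) auto
  moreover have "X v * cpoly d z - cpoly d (smul (X v) z) = 0"
    by (simp add: cpoly_smul)
  ultimately show ?thesis
    by (metis dvd_0_right)
qed

lemma cpoly_division:
  fixes p :: "'k::comm_ring_1 mpoly"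
  assumes "vars_of p \<subseteq> insert VC (varsA (Suc d))"
  shows "\<exists>z\<in>freeMod d. Fpoly d dvd (p - cpoly d z)"
  using assms
proof (induction rule: mpoly_induct)
  case (const a)
  let ?z = "\<lambda>l. if l = 0 then mconst a else 0"
  have "?z \<in> freeMod d" "cpoly d ?z = mconst a"
    by (simp_all add: freeMod_iff cpoly_def if_distrib[of "\<lambda>x. x * _"] cong: if_cong)
  then show ?case
    by force
next
  case (add p q)
  then obtain x y where "x \<in> freeMod d" "y \<in> freeMod d"
    "Fpoly d dvd (p - cpoly d x)" "Fpoly d dvd (q - cpoly d y)"
    by blast
  moreover have "p + q - cpoly d (madd x y) = (p - cpoly d x) + (q - cpoly d y)"
    by (simp add: cpoly_madd)
  ultimately have "madd x y \<in> freeMod d" "Fpoly d dvd (p + q - cpoly d (madd x y))"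
    by (simp_all only: freeMod_madd dvd_add)
  then show ?case
    by blast
next
  case (X_mult p v)
  then obtain z where z: "z \<in> freeMod d" "Fpoly d dvd (p - cpoly d z)"
    by blast
  obtain z' where z': "z' \<in> freeMod d" "Fpoly d dvd (X v * cpoly d z - cpoly d z')"
    using X_mult_cpoly_mod[OF z(1) X_mult.hyps] by blast
  have "Fpoly d dvd X v * (p - cpoly d z) + (X v * cpoly d z - cpoly d z')"
    using z(2) z'(2) by (intro dvd_add dvd_mult)
  also have "\<dots> = X v * p - cpoly d z'"
    by (simp add: algebra_simps)
  finally show ?case
    using z'(1) by blast
qed

text \<open>Column m of the matrix of multiplication by G on A_(d+1)[c]/(F) in the basis 1, c, ..., c^d.\<close>

primrec G_column :: "nat \<Rightarrow> nat \<Rightarrow> nat \<Rightarrow> 'k::comm_ring_1 mpoly" where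
  "G_column d 0 = (\<lambda>l. if l \<le> d then X (VB (Suc l)) else 0)"
| "G_column d (Suc m) = mul_c d (G_column d m)"

lemma freeMod_G_column: "G_column d m \<in> freeMod d"
  by (induction m) (simp_all add: freeMod_mul_c, simp add: freeMod_iff)

lemma cpoly_G_column: "Fpoly d dvd (Gpoly d * X VC ^ m - cpoly d (G_column d m))"
proof (induction m)
  case 0
  show ?case
    by (simp add: cpoly_def horner_tail_def atLeast0AtMost)
next
  case (Suc m)
  have eq: "Gpoly d * X VC ^ Suc m - cpoly d (G_column d (Suc m))
        = X VC * (Gpoly d * X VC ^ m - cpoly d (G_column d m)) + G_column d m d * Fpoly d"
    by (simp add: cpoly_mul_c algebra_simps)
  show ?case
    unfolding eq using Suc.IH by (intro dvd_add dvd_mult dvd_triv_right)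
qed

definition phi :: "nat \<Rightarrow> (nat \<Rightarrow> 'k::comm_ring_1 mpoly) \<Rightarrow> (nat \<Rightarrow> 'k mpoly)" where
  "phi d y = (\<lambda>l. if l \<le> d then (\<Sum>m\<le>d. G_column d m l * y m) else 0)"

definition psi :: "nat \<Rightarrow> (nat \<Rightarrow> 'k::comm_ring_1 mpoly) \<Rightarrow> 'k mpoly" where
  "psi d x = (\<Sum>l\<le>d. fmap d (x l) * X VC ^ l)"

lemma cpoly_phi: "Fpoly d dvd (Gpoly d * cpoly d y - cpoly d (phi d y))"
proof -
  have "cpoly d (phi d y) = (\<Sum>l\<le>d. \<Sum>m\<le>d. y m * (G_column d m l * X VC ^ l))"
    unfolding cpoly_def phi_def by (intro sum.cong) (simp_all add: sum_distrib_left sum_distrib_right mult_ac)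
  also have "\<dots> = (\<Sum>m\<le>d. y m * cpoly d (G_column d m))"
    by (subst sum.swap) (simp add: cpoly_def sum_distrib_left)
  finally have "Gpoly d * cpoly d y - cpoly d (phi d y)
                = (\<Sum>m\<le>d. y m * (Gpoly d * X VC ^ m - cpoly d (G_column d m)))"
    by (simp add: cpoly_def sum_distrib_left right_diff_distrib sum_subtractf mult_ac)
  then show ?thesis
    by (simp only:) (intro dvd_sum dvd_mult cpoly_G_column)
qed

lemma psi_eq_subst_fext_cpoly:
  assumes "x \<in> freeMod d"
  shows "psi d x = subst (fext d) (cpoly d x)"
proof -
  have "fmap d (x l) = subst (fext d) (x l)" for l
    unfolding fmap_def
  proof (rule subst_cong)
    fix v assume "v \<in> vars_of (x l)"
    then have "v \<noteq> VC"
      using assms VC_notin_varsA unfolding freeMod_iff by blast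
    then show "fimg d v = fext d v"
      by (simp add: fext_def)
  qed
  then show ?thesis
    by (simp add: psi_def cpoly_def)
qed

lemma Gpoly_mult_eq_0: "q * Gpoly d = 0 \<Longrightarrow> q = (0 :: 'k::comm_ring_1 mpoly)"
proof (rule mult_eq_0_if_monic_in)
  have "VB 1 \<notin> vars_of (horner_tail VB (0 :: 'k mpoly) d 1)"
    using vars_of_horner_tail[of 0 VB d 1] by auto
  moreover have "Gpoly d = X (VB 1) + X VC * (horner_tail VB 0 d 1 :: 'k mpoly)"
    using horner_tail_Suc[of 0 d VB 0] by simp
  ultimately have "poly_in (VB 1) (Gpoly d :: 'k mpoly) = [:0, 1:] + [:X VC * horner_tail VB 0 d 1:]"
    by (simp add: poly_in_free_var)
  then show "lead_coeff (poly_in (VB 1) (Gpoly d :: 'k mpoly)) = 1"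
    by simp
qed

lemma Fpoly_dvd_Gpoly_mult:
  fixes q :: "'k::comm_ring_1 mpoly"
  assumes "Fpoly d dvd Gpoly d * q"
  shows "Fpoly d dvd q"
proof -
  \<comment> \<open>Solving F = 0 for a_1 gives a substitution that kills F and fixes G.\<close>
  define \<rho> where "\<rho> v = (if v = VA 1 then X (VA 1) - Fpoly d else X v :: 'k mpoly)" for v
  have F: "Fpoly d = X (VA 1) + X VC * (horner_tail VA 1 d 1 :: 'k mpoly)"
    using horner_tail_Suc[of 0 d VA 1] by simp
  have "subst \<rho> (horner_tail VA 1 d 1) = horner_tail VA 1 d 1"
    using vars_of_horner_tail[of 1 VA d 1] by (intro subst_eq_self) (auto simp: \<rho>_def)
  then have "subst \<rho> (Fpoly d) = 0"
    unfolding F by (simp add: \<rho>_def F)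
  moreover have "subst \<rho> (Gpoly d) = Gpoly d"
    using vars_of_horner_tail[of 0 VB d 0] by (intro subst_eq_self) (auto simp: \<rho>_def)
  moreover obtain W where "Gpoly d * q = Fpoly d * W"
    using assms by blast
  ultimately have "subst \<rho> q * Gpoly d = 0"
    by (metis subst.map_mult mult_zero_left mult.commute)
  then have "subst \<rho> q = 0"
    by (rule Gpoly_mult_eq_0)
  moreover have "\<exists>u w. subst \<rho> q - q = u * Fpoly d + w * 0"
  proof (rule subst_diff_self_in_ideal2)
    fix v
    have "\<rho> v - X v = (if v = VA 1 then - 1 else 0) * Fpoly d + 0 * 0"
      by (simp add: \<rho>_def)
    then show "\<exists>u w. \<rho> v - X v = u * Fpoly d + w * 0"
      by blast
  qed
  ultimately obtain u where "- q = u * Fpoly d"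
    by auto
  then have "q = (- u) * Fpoly d"
    by (metis minus_minus mult_minus_left)
  then show ?thesis
    by simp
qed

lemma freeMod_phi:
  assumes "y \<in> freeMod d"
  shows "phi d y \<in> freeMod d"
proof -
  have "vars_of (G_column d m l * y m) \<subseteq> varsA (Suc d)" for m l
    using freeMod_G_column[of d m] assms by (intro vars_of_mult_subset) (auto simp: freeMod_iff)
  then show ?thesis
    by (simp add: freeMod_iff phi_def vars_of_sum_subset)
qed

lemma psi_phi:
  assumes "y \<in> freeMod d"
  shows "psi d (phi d y) = 0"
proof -
  obtain W where "Gpoly d * cpoly d y - cpoly d (phi d y) = Fpoly d * W"
    using cpoly_phi by blast
  then have "cpoly d (phi d y) = Gpoly d * cpoly d y - Fpoly d * W"
    by (simp add: algebra_simps)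
  then show ?thesis
    by (simp add: psi_eq_subst_fext_cpoly freeMod_phi assms)
qed

lemma kernel_psi:
  assumes x: "x \<in> freeMod d" and "psi d x = 0"
  shows "x \<in> phi d ` freeMod d"
proof -
  have "subst (fext d) (cpoly d x) = 0"
    using assms by (simp add: psi_eq_subst_fext_cpoly)
  then obtain u w where w: "vars_of w \<subseteq> insert VC (varsA (Suc d))"
    and cpoly_x: "cpoly d x = u * Fpoly d + w * Gpoly d"
    using kernel_subst_fext[OF vars_of_cpoly[OF x]] by blast
  obtain y where y: "y \<in> freeMod d" "Fpoly d dvd (w - cpoly d y)"
    using cpoly_division[OF w] by blast
  have eq: "cpoly d x - cpoly d (phi d y)
        = u * Fpoly d + (w - cpoly d y) * Gpoly d + (Gpoly d * cpoly d y - cpoly d (phi d y))"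
    by (simp add: cpoly_x algebra_simps)
  have "Fpoly d dvd u * Fpoly d + (w - cpoly d y) * Gpoly d + (Gpoly d * cpoly d y - cpoly d (phi d y))"
    using y(2) cpoly_phi[of d y] by (intro dvd_add dvd_triv_right dvd_mult2)
  then have "Fpoly d dvd (cpoly d x - cpoly d (phi d y))"
    by (simp only: eq)
  then have "x = phi d y"
    by (rule freeMod_eqI[OF x freeMod_phi[OF y(1)]])
  then show ?thesis
    using y(1) by blast
qed

lemma inj_on_phi: "inj_on (phi d) (freeMod d)"
proof (rule inj_onI)
  fix y z assume y: "y \<in> freeMod d" and z: "z \<in> freeMod d" and eq: "phi d y = phi d z"
  have "Gpoly d * (cpoly d y - cpoly d z)
        = (Gpoly d * cpoly d y - cpoly d (phi d y)) - (Gpoly d * cpoly d z - cpoly d (phi d z))"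
    by (simp add: eq algebra_simps)
  then have "Fpoly d dvd Gpoly d * (cpoly d y - cpoly d z)"
    using cpoly_phi[of d y] cpoly_phi[of d z] by (simp add: dvd_diff)
  then show "y = z"
    by (rule freeMod_eqI[OF y z Fpoly_dvd_Gpoly_mult])
qed

lemma psi_surj:
  assumes b: "b \<in> polyB d"
  shows "b \<in> psi d ` freeMod d"
proof -
  have "vars_of (subst (lift d) b) \<subseteq> insert VC (varsA (Suc d))"
    using b vars_of_lift by (intro vars_of_subst_subset) (auto simp: polyB_iff)
  then obtain z W where z: "z \<in> freeMod d" "subst (lift d) b - cpoly d z = Fpoly d * W"
    using cpoly_division by blast
  have "psi d z = subst (fext d) (subst (lift d) b - Fpoly d * W)"
    using z by (simp add: psi_eq_subst_fext_cpoly algebra_simps)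
  also have "\<dots> = b"
    using b by (simp add: subst_fext_lift polyB_iff)
  finally show ?thesis
    using z(1) by (metis image_eqI)
qed

section \<open>Linearity and grading\<close>

lemma phi_madd: "phi d (madd x y) = madd (phi d x) (phi d y)"
  by (simp add: fun_eq_iff phi_def madd_def distrib_left sum.distrib)

lemma phi_smul: "phi d (smul a x) = smul a (phi d x)"
  by (simp add: fun_eq_iff phi_def smul_def sum_distrib_left mult_ac)

lemma psi_madd: "psi d (madd x y) = psi d x + psi d y"
  by (simp add: psi_def madd_def fmap_def distrib_right sum.distrib)

lemma psi_smul: "psi d (smul a x) = fmap d a * psi d x"
  by (simp add: psi_def smul_def fmap_def sum_distrib_left mult_ac)

lemma vars_of_fimg:
  assumes "v \<in> varsA (Suc d)"
  shows "vars_of (fimg d v :: 'k::comm_ring_1 mpoly) \<subseteq> insert VC (varsA d)"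
proof -
  obtain u and e :: "'k mpoly" and i where ue: "(u, e) \<in> {(VA, 1), (VB, 0)}"
    and "v = u i" "1 \<le> i" "i \<le> Suc d"
    using assms by (rule varsA_E)
  then show ?thesis
    by (simp add: fimg_eq_bvar[OF ue] vars_of_subsetI vars_of_bvar[OF ue])
qed

lemma psi_polyB: "x \<in> freeMod d \<Longrightarrow> psi d x \<in> polyB d"
  unfolding polyB_iff psi_def fmap_def freeMod_iff
  by (intro vars_of_subsetI vars_of_subst_subset vars_of_fimg) auto

lemma homog_bvar:
  assumes "(u, e) \<in> {(VA, 1), (VB, 0)}"
  shows "homog (wB d) (wB d (u j)) (bvar u e d j)"
  using assms by (auto simp: bvar_def homog_X homog_one[unfolded zero_prod_def])

lemma homog_fimg:
  assumes "v \<in> varsA (Suc d)"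
  shows "homog (wB d) (wA (Suc d) v) (fimg d v :: 'k::comm_ring_1 mpoly)"
proof -
  obtain u and e :: "'k mpoly" and i where ue: "(u, e) \<in> {(VA, 1), (VB, 0)}"
    and v: "v = u i" and i: "1 \<le> i" "i \<le> Suc d"
    using assms by (rule varsA_E)
  have "wB d (u (i - 1)) = wA (Suc d) (u i)" "(2, 0) + wB d (u i) = wA (Suc d) (u i)"
    using ue i by (auto simp: of_nat_diff)
  then show ?thesis
    unfolding v fimg_eq_bvar[OF ue]
    by (metis homog_diff homog_mult homog_bvar[OF ue] homog_X[of "wB d" VC] wB.simps(3))
qed

lemma homog_G_column:
  "l \<le> d \<Longrightarrow> homog (wA (Suc d)) (2 * (int d + 1) + 2 * int m - 2 * int l, -2) (G_column d m l :: 'k::comm_ring_1 mpoly)"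
proof (induction m arbitrary: l)
  case 0
  then show ?case
    using homog_X[of "wA (Suc d)" "VB (Suc l)"] by (simp add: algebra_simps)
next
  case (Suc m)
  have "homog (wA (Suc d)) ((2 * (int d + 1) + 2 * int m - 2 * int d, -2) + wA (Suc d) (VA (Suc l)))
          (G_column d m d * X (VA (Suc l)) :: 'k mpoly)"
    by (rule homog_mult[OF Suc.IH[OF order_refl] homog_X])
  then have last: "homog (wA (Suc d)) (2 * (int d + 1) + 2 * int (Suc m) - 2 * int l, -2)
                     (G_column d m d * X (VA (Suc l)) :: 'k mpoly)"
    by (simp add: algebra_simps)
  have "homog (wA (Suc d)) (2 * (int d + 1) + 2 * int (Suc m) - 2 * int l, -2)
          (if l = 0 then 0 else G_column d m (l - 1) :: 'k mpoly)"
    using Suc.IH[of "l - 1"] Suc.prems by (auto simp: algebra_simps of_nat_diff)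
  then show ?case
    using Suc.prems last by (simp add: mul_c_def homog_diff)
qed

lemma homogM_phi:
  assumes "homogM d (shiftSub d) ij y"
  shows "homogM d shiftMid ij (phi d y)"
  unfolding homogM_def
proof (intro allI impI)
  fix l assume l: "l \<le> d"
  have "homog (wA (Suc d)) (fst ij - 2 * int l, snd ij) (G_column d m l * y m)" if "m \<le> d" for m
  proof -
    have "homog (wA (Suc d)) (fst ij - (2 * (int d + 1) + 2 * int m), snd ij + 2) (y m)"
      using assms that by (simp add: homogM_def shiftSub_def)
    then have "homog (wA (Suc d)) ((2 * (int d + 1) + 2 * int m - 2 * int l, -2)
                 + (fst ij - (2 * (int d + 1) + 2 * int m), snd ij + 2)) (G_column d m l * y m)"
      by (intro homog_mult homog_G_column l)
    then show ?thesis
      by (simp add: algebra_simps)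
  qed
  then have "homog (wA (Suc d)) (fst ij - 2 * int l, snd ij) (\<Sum>m\<le>d. G_column d m l * y m)"
    by (intro homog_sum) auto
  then show "homog (wA (d + 1)) (fst ij - fst (shiftMid l), snd ij - snd (shiftMid l)) (phi d y l)"
    using l by (simp add: phi_def shiftMid_def)
qed

lemma homog_psi:
  assumes x: "x \<in> freeMod d" and "homogM d shiftMid ij x"
  shows "homog (wB d) ij (psi d x)"
  unfolding psi_def
proof (rule homog_sum)
  fix l assume "l \<in> {..d}"
  then have "homog (wA (Suc d)) (fst ij - 2 * int l, snd ij) (x l)"
    using assms(2) by (simp add: homogM_def shiftMid_def)
  then have "homog (wB d) (fst ij - 2 * int l, snd ij) (fmap d (x l))"
    unfolding fmap_def
  proof (rule homog_subst)
    fix v assume "v \<in> vars_of (x l)"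
    then show "homog (wB d) (wA (Suc d) v) (fimg d v)"
      using x by (intro homog_fimg) (auto simp: freeMod_iff)
  qed
  then have "homog (wB d) ((fst ij - 2 * int l, snd ij) + (int l * 2, int l * 0)) (fmap d (x l) * X VC ^ l)"
    using homog_X[of "wB d" VC] by (intro homog_mult homog_power) simp_all
  then show "homog (wB d) ij (fmap d (x l) * X VC ^ l)"
    by simp
qed

theorem mainTheorem1:
  fixes d :: nat
  shows "\<exists>(\<phi> :: (nat \<Rightarrow> 'k::field mpoly) \<Rightarrow> (nat \<Rightarrow> 'k mpoly)) (\<psi> :: (nat \<Rightarrow> 'k mpoly) \<Rightarrow> 'k mpoly).
    \<phi> ` freeMod d \<subseteq> freeMod d \<and>
    (\<forall>x\<in>freeMod d. \<forall>y\<in>freeMod d. \<phi> (madd x y) = madd (\<phi> x) (\<phi> y)) \<and>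
    (\<forall>a\<in>polyA (d + 1). \<forall>x\<in>freeMod d. \<phi> (smul a x) = smul a (\<phi> x)) \<and>
    (\<forall>x\<in>freeMod d. \<forall>ij. homogM d (shiftSub d) ij x \<longrightarrow> homogM d shiftMid ij (\<phi> x)) \<and>
    \<psi> ` freeMod d \<subseteq> polyB d \<and>
    (\<forall>x\<in>freeMod d. \<forall>y\<in>freeMod d. \<psi> (madd x y) = \<psi> x + \<psi> y) \<and>
    (\<forall>a\<in>polyA (d + 1). \<forall>x\<in>freeMod d. \<psi> (smul a x) = fmap d a * \<psi> x) \<and>
    (\<forall>x\<in>freeMod d. \<forall>ij. homogM d shiftMid ij x \<longrightarrow> homog (wB d) ij (\<psi> x)) \<and>
    inj_on \<phi> (freeMod d) \<and>
    \<phi> ` freeMod d = {x \<in> freeMod d. \<psi> x = 0} \<and>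
    \<psi> ` freeMod d = polyB d"
proof (intro exI conjI)
  show "phi d ` freeMod d = {x \<in> freeMod d. psi d x = 0}"
    using freeMod_phi psi_phi kernel_psi by blast
  show "psi d ` freeMod d = polyB d"
    using psi_polyB psi_surj by blast
qed (use freeMod_phi psi_polyB inj_on_phi homogM_phi homog_psi in
      \<open>auto simp: phi_madd phi_smul psi_madd psi_smul\<close>)

end
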